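(* Consider $\dot y=Ay+B(u+\Delta(y,t))$, $y\in\mathbb{R}^{\bar n}$, $u\in\mathbb{R}^{\bar m}$, with constant $A$, full-rank $B\in\mathbb{R}^{\bar n\times\bar m}$, unknown $\Delta$ with $\|\Delta(y,t)\|\le\Delta_M$ for all $y,t$, and $K\in\mathbb{R}^{\bar m\times\bar n}$ such that $A^{cl}=A+BK$ is Hurwitz. Let $S\in\mathbb{R}^{\bar m\times\bar n}$ satisfy $\det(SB)\neq0$ and $Sy=0\Rightarrow SA^{cl}y=0$, let $\mathcal A_\sigma:=SA^{cl}S^\dagger$, and let $P=P^{\mathsf T}\succ0$ be the unique solution of $\mathcal A_\sigma^{\mathsf T}P+P\mathcal A_\sigma=-Q$ for some symmetric positive definite $Q\in\mathbb{R}^{\bar m\times\bar m}$. Then the control $u=Ky+(SB)^{-1}v$ with $\sigma=Sy$ and $$v=-\mu\frac{\sigma}{\|\sigma\|}\ \text{if }\sigma\neq0,\qquad v=0\ \text{if }\sigma=0,$$ where $\mu\ge\frac{1}{\lambda_{\min}(P)}\big[\tfrac12\mu_\star+\lambda_{\max}(P)\|SB\|\Delta_M\big]$ for some $\mu_\star>0$, guarantees that the manifold $\{y: Sy=0\}$ is reached in finite time.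
   Context: $S^\dagger$ is the Moore--Penrose pseudoinverse; $\lambda_{\min}(P),\lambda_{\max}(P)$ denote the smallest and largest eigenvalues of $P$. *)

theory Defs
  imports "HOL-Analysis.Analysis"
begin

text \<open>Moore--Penrose pseudoinverse, defined by the four Penrose conditions
  (which determine it uniquely).\<close>
definition pinv :: "real^'n^'m \<Rightarrow> real^'m^'n" where
  "pinv X = (THE Y. X ** Y ** X = X \<and> Y ** X ** Y = Y \<and>
                    transpose (X ** Y) = X ** Y \<and> transpose (Y ** X) = Y ** X)"

definition symmetric_mat :: "real^'n^'n \<Rightarrow> bool" where
  "symmetric_mat P \<longleftrightarrow> transpose P = P"

definition pos_def :: "real^'n^'n \<Rightarrow> bool" where
  "pos_def P \<longleftrightarrow> (\<forall>x. x \<noteq> 0 \<longrightarrow> x \<bullet> (P *v x) > 0)"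

text \<open>Real eigenvalues; for a symmetric matrix all eigenvalues are real.\<close>
definition real_eigenvalues :: "real^'n^'n \<Rightarrow> real set" where
  "real_eigenvalues P = {l. \<exists>v. v \<noteq> 0 \<and> P *v v = l *\<^sub>R v}"

definition lambda_min :: "real^'n^'n \<Rightarrow> real" where
  "lambda_min P = Min (real_eigenvalues P)"

definition lambda_max :: "real^'n^'n \<Rightarrow> real" where
  "lambda_max P = Max (real_eigenvalues P)"

definition cmat :: "real^'n^'m \<Rightarrow> complex^'n^'m" where
  "cmat A = (\<chi> i j. complex_of_real (A $ i $ j))"

definition hurwitz :: "real^'n^'n \<Rightarrow> bool" where
  "hurwitz A \<longleftrightarrow> (\<forall>(l::complex) v. v \<noteq> 0 \<and> cmat A *v v = l *s v \<longrightarrow> Re l < 0)"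

end

(*
  Write sigma = S y.  Since ker S is invariant under A + BK, the closed loop projects onto
  sigma' = A_sigma sigma - mu sigma / |sigma| + S B Delta.  Along it, V = sigma^T P sigma satisfies
  V' <= -mu_star |sigma| by the Lyapunov equation, the Rayleigh bounds
  lambda_min P |sigma|^2 <= V <= lambda_max P |sigma|^2 and the choice of mu.  Hence sqrt V
  decreases at a rate of at least mu_star / (2 sqrt (lambda_max P)); being nonnegative, it
  cannot do so forever, so sigma must vanish in finite time.
*)
theory Submission
  imports Defs
begin

lemma inner_matrix_vector_transpose:
  "x \<bullet> ((A::real^'n^'m) *v y) = (transpose A *v x) \<bullet> y"
  by (simp add: dot_lmul_matrix)

lemma symmetric_mat_inner:
  "symmetric_mat P \<Longrightarrow> x \<bullet> (P *v y) = (P *v x) \<bullet> y"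
  unfolding symmetric_mat_def by (metis inner_matrix_vector_transpose)

lemma uminus_matrix_vector_mult: "(- (A::real^'n^'m)) *v x = - (A *v x)"
  using matrix_vector_mult_diff_rdistrib[of 0 A x] by simp

lemma symmetric_mat_uminus: "symmetric_mat P \<Longrightarrow> symmetric_mat (- P)"
  by (simp add: symmetric_mat_def transpose_def vec_eq_iff)

text \<open>If the form vanished at \<open>x\<close> but \<open>N x \<noteq> 0\<close>, moving from \<open>x\<close> along a direction \<open>y\<close>
  with \<open>y \<bullet> N x \<noteq> 0\<close> would make it negative to first order.\<close>
lemma symmetric_psd_form_zero_imp_kernel:
  fixes N :: "real^'n^'n"
  assumes sym: "symmetric_mat N" and psd: "\<And>x. 0 \<le> x \<bullet> (N *v x)"
    and zero: "x \<bullet> (N *v x) = 0"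
  shows "N *v x = 0"
proof -
  have "y \<bullet> (N *v x) = 0" for y
  proof (rule ccontr)
    define a where "a = y \<bullet> (N *v x)"
    define b where "b = y \<bullet> (N *v y)"
    define s where "s = - a / (b + 1)"
    assume "y \<bullet> (N *v x) \<noteq> 0"
    then have "a \<noteq> 0" by (simp add: a_def)
    have "0 \<le> b" using psd by (simp add: b_def)
    have "x \<bullet> (N *v y) = a"
      unfolding a_def using symmetric_mat_inner[OF sym] by (metis inner_commute)
    then have "(x + s *\<^sub>R y) \<bullet> (N *v (x + s *\<^sub>R y)) = 2 * s * a + s\<^sup>2 * b"
      using zero by (simp add: matrix_vector_right_distrib inner_add_left inner_add_right
          a_def b_def power2_eq_square algebra_simps matrix_vector_mult_scaleR)
    also have "\<dots> = a\<^sup>2 * (b - 2 * (b + 1)) / (b + 1)\<^sup>2"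
      using \<open>0 \<le> b\<close> unfolding s_def
      by (simp add: divide_simps power2_eq_square) (simp add: algebra_simps)
    also have "\<dots> < 0"
      using \<open>a \<noteq> 0\<close> \<open>0 \<le> b\<close> by (intro divide_neg_pos mult_pos_neg) auto
    finally show False using psd by (metis not_le)
  qed
  from this[of "N *v x"] show ?thesis by simp
qed

text \<open>The minimiser of the Rayleigh quotient on the unit sphere is an eigenvector.\<close>
lemma symmetric_mat_min_eigenvalue:
  fixes P :: "real^'n^'n"
  assumes sym: "symmetric_mat P"
  obtains c where "c \<in> real_eigenvalues P" and "\<And>x. c * (x \<bullet> x) \<le> x \<bullet> (P *v x)"
proof -
  define f where "f x = x \<bullet> (P *v x)" for x :: "real^'n"
  have "continuous_on (sphere 0 1) f"
    unfolding f_def by (intro continuous_intros)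
  moreover have "sphere (0::real^'n) 1 \<noteq> {}" by simp
  ultimately obtain x0 where x0: "x0 \<in> sphere 0 1" and min: "\<And>y. y \<in> sphere 0 1 \<Longrightarrow> f x0 \<le> f y"
    using continuous_attains_inf[OF compact_sphere] by blast
  define c where "c = f x0"
  have bound: "c * (x \<bullet> x) \<le> x \<bullet> (P *v x)" for x
  proof (cases "x = 0")
    case False
    define u where "u = (1 / norm x) *\<^sub>R x"
    have xu: "x = norm x *\<^sub>R u" using False by (simp add: u_def)
    have "x \<bullet> (P *v x) = (norm x)\<^sup>2 * f u"
      by (subst (1 2) xu)
        (simp add: f_def matrix_vector_mult_scaleR power2_eq_square)
    moreover have "c \<le> f u" using min False by (simp add: c_def u_def)
    ultimately show ?thesis
      by (simp add: power2_norm_eq_inner mult_right_mono mult.commute)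
  qed simp
  define N where "N = P - c *\<^sub>R mat 1"
  have N: "N *v x = P *v x - c *\<^sub>R x" for x
    by (simp add: N_def matrix_vector_mult_diff_rdistrib scaleR_matrix_vector_assoc[symmetric])
  have "symmetric_mat N"
    using sym by (simp add: symmetric_mat_def N_def transpose_def vec_eq_iff mat_def)
  moreover have "0 \<le> x \<bullet> (N *v x)" for x
    using bound by (simp add: N inner_diff_right)
  moreover have "x0 \<bullet> (N *v x0) = 0"
    using x0 by (simp add: N inner_diff_right c_def f_def power2_norm_eq_inner[symmetric])
  ultimately have "N *v x0 = 0" by (rule symmetric_psd_form_zero_imp_kernel)
  then have "x0 \<noteq> 0 \<and> P *v x0 = c *\<^sub>R x0" using x0 by (auto simp: N)
  then show ?thesis using that bound unfolding real_eigenvalues_def by blast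
qed

lemma symmetric_mat_max_eigenvalue:
  fixes P :: "real^'n^'n"
  assumes "symmetric_mat P"
  obtains c where "c \<in> real_eigenvalues P" and "\<And>x. x \<bullet> (P *v x) \<le> c * (x \<bullet> x)"
proof -
  obtain c where c: "c \<in> real_eigenvalues (- P)" and min: "\<And>x. c * (x \<bullet> x) \<le> x \<bullet> ((- P) *v x)"
    using symmetric_mat_min_eigenvalue[OF symmetric_mat_uminus[OF assms]] by blast
  have "x \<bullet> (P *v x) \<le> - c * (x \<bullet> x)" for x
    using min[of x] by (simp add: uminus_matrix_vector_mult)
  moreover have "- c \<in> real_eigenvalues P"
    using c by (auto simp: real_eigenvalues_def uminus_matrix_vector_mult)
      (metis minus_minus scaleR_minus_left)
  ultimately show ?thesis using that by blast
qed

lemma finite_real_eigenvalues: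
  fixes P :: "real^'n^'n"
  assumes sym: "symmetric_mat P"
  shows "finite (real_eigenvalues P)"
proof -
  define E where "E = real_eigenvalues P"
  define v where "v l = (SOME v. v \<noteq> 0 \<and> P *v v = l *\<^sub>R v)" for l
  have v: "v l \<noteq> 0 \<and> P *v v l = l *\<^sub>R v l" if "l \<in> E" for l
  proof -
    have "\<exists>w. w \<noteq> 0 \<and> P *v w = l *\<^sub>R w"
      using that by (simp add: E_def real_eigenvalues_def)
    then show ?thesis unfolding v_def by (rule someI_ex)
  qed
  have orth: "v l1 \<bullet> v l2 = 0" if "l1 \<in> E" "l2 \<in> E" "l1 \<noteq> l2" for l1 l2
  proof -
    have "l2 * (v l1 \<bullet> v l2) = v l1 \<bullet> (P *v v l2)" using v[OF that(2)] by simp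
    also have "\<dots> = (P *v v l1) \<bullet> v l2" by (rule symmetric_mat_inner[OF sym])
    also have "\<dots> = l1 * (v l1 \<bullet> v l2)" using v[OF that(1)] by simp
    finally show ?thesis using that(3) by simp
  qed
  have "inj_on v E"
    using orth v by (intro inj_onI) (metis inner_eq_zero_iff)
  moreover have "independent (v ` E)"
    using orth v by (intro pairwise_orthogonal_independent) (auto simp: pairwise_def orthogonal_def)
  then have "finite (v ` E)" using independent_bound by blast
  ultimately show ?thesis using finite_imageD by (simp add: E_def)
qed

lemma lambda_min_in_real_eigenvalues:
  assumes "symmetric_mat P"
  shows "lambda_min P \<in> real_eigenvalues P"
proof -
  obtain c where "c \<in> real_eigenvalues P"
    using symmetric_mat_min_eigenvalue[OF assms] by blast
  then show ?thesis
    unfolding lambda_min_def using finite_real_eigenvalues[OF assms] by (intro Min_in) auto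
qed

lemma lambda_max_in_real_eigenvalues:
  assumes "symmetric_mat P"
  shows "lambda_max P \<in> real_eigenvalues P"
proof -
  obtain c where "c \<in> real_eigenvalues P"
    using symmetric_mat_max_eigenvalue[OF assms] by blast
  then show ?thesis
    unfolding lambda_max_def using finite_real_eigenvalues[OF assms] by (intro Max_in) auto
qed

lemma lambda_min_le_form:
  fixes P :: "real^'n^'n"
  assumes sym: "symmetric_mat P"
  shows "lambda_min P * (x \<bullet> x) \<le> x \<bullet> (P *v x)"
proof -
  obtain c where "c \<in> real_eigenvalues P" and c: "c * (x \<bullet> x) \<le> x \<bullet> (P *v x)"
    using symmetric_mat_min_eigenvalue[OF sym] by metis
  then have "lambda_min P \<le> c"
    unfolding lambda_min_def using finite_real_eigenvalues[OF sym] by simp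
  then show ?thesis using c by (meson inner_ge_zero mult_right_mono order_trans)
qed

lemma lambda_max_ge_form:
  fixes P :: "real^'n^'n"
  assumes sym: "symmetric_mat P"
  shows "x \<bullet> (P *v x) \<le> lambda_max P * (x \<bullet> x)"
proof -
  obtain c where "c \<in> real_eigenvalues P" and c: "x \<bullet> (P *v x) \<le> c * (x \<bullet> x)"
    using symmetric_mat_max_eigenvalue[OF sym] by metis
  then have "c \<le> lambda_max P"
    unfolding lambda_max_def using finite_real_eigenvalues[OF sym] by simp
  then show ?thesis using c by (meson inner_ge_zero mult_right_mono order_trans)
qed

lemma pos_def_eigenvalue_pos:
  assumes "pos_def P" and "l \<in> real_eigenvalues P"
  shows "0 < l"
proof -
  obtain v where v: "v \<noteq> 0" "P *v v = l *\<^sub>R v"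
    using assms(2) unfolding real_eigenvalues_def by blast
  then have "0 < l * (v \<bullet> v)" using assms(1) unfolding pos_def_def by force
  then show ?thesis using v(1) inner_ge_zero[of v] by (auto simp: zero_less_mult_iff)
qed

lemma pos_def_imp_psd: "pos_def P \<Longrightarrow> 0 \<le> x \<bullet> (P *v x)"
  unfolding pos_def_def by (cases "x = 0") (auto intro: less_imp_le)

text \<open>Polarisation: \<open>4 a \<bullet> P b\<close> is the difference of the forms at \<open>a + b\<close> and \<open>a - b\<close>.\<close>
lemma symmetric_psd_bilinear_le:
  fixes P :: "real^'n^'n"
  assumes sym: "symmetric_mat P" and psd: "\<And>x. 0 \<le> x \<bullet> (P *v x)"
    and ub: "\<And>x. x \<bullet> (P *v x) \<le> M * (x \<bullet> x)"
  shows "a \<bullet> (P *v b) \<le> M * norm a * norm b"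
proof (cases "a = 0 \<or> b = 0")
  case False
  define a' where "a' = (1 / norm a) *\<^sub>R a"
  define b' where "b' = (1 / norm b) *\<^sub>R b"
  have "norm a' = 1" "norm b' = 1" using False by (auto simp: a'_def b'_def)
  have "0 \<le> M" using psd[of a'] ub[of a'] \<open>norm a' = 1\<close>
    by (simp add: power2_norm_eq_inner[symmetric])
  have "b' \<bullet> (P *v a') = a' \<bullet> (P *v b')"
    using symmetric_mat_inner[OF sym] by (metis inner_commute)
  then have "4 * (a' \<bullet> (P *v b')) = (a' + b') \<bullet> (P *v (a' + b')) - (a' - b') \<bullet> (P *v (a' - b'))"
    by (simp add: matrix_vector_right_distrib matrix_vector_mult_diff_distrib
        inner_add_left inner_add_right inner_diff_left inner_diff_right)
  also have "\<dots> \<le> M * ((a' + b') \<bullet> (a' + b'))"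
    using ub[of "a' + b'"] psd[of "a' - b'"] by linarith
  also have "\<dots> \<le> M * 4"
  proof -
    have "norm (a' + b') \<le> 2"
      using norm_triangle_ineq[of a' b'] \<open>norm a' = 1\<close> \<open>norm b' = 1\<close> by simp
    then have "(norm (a' + b'))\<^sup>2 \<le> 2\<^sup>2" by (intro power_mono) auto
    then have "(a' + b') \<bullet> (a' + b') \<le> 4" by (simp add: power2_norm_eq_inner)
    then show ?thesis using \<open>0 \<le> M\<close> by (rule mult_left_mono)
  qed
  finally have "a' \<bullet> (P *v b') \<le> M" by simp
  moreover have "a \<bullet> (P *v b) = norm a * norm b * (a' \<bullet> (P *v b'))"
    using False by (simp add: a'_def b'_def matrix_vector_mult_scaleR)
  ultimately show ?thesis
    using mult_left_mono[of "a' \<bullet> (P *v b')" M "norm a * norm b"] by (simp add: mult_ac)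
qed auto

definition penrose_inverse :: "real^'n^'m \<Rightarrow> real^'m^'n \<Rightarrow> bool" where
  "penrose_inverse X Y \<longleftrightarrow> X ** Y ** X = X \<and> Y ** X ** Y = Y \<and>
     transpose (X ** Y) = X ** Y \<and> transpose (Y ** X) = Y ** X"

lemma penrose_inverse_unique:
  assumes "penrose_inverse X Y" and "penrose_inverse X Z"
  shows "Y = Z"
proof -
  have Y: "X ** Y ** X = X" "Y ** X ** Y = Y" "transpose (X ** Y) = X ** Y" "transpose (Y ** X) = Y ** X"
    and Z: "X ** Z ** X = X" "Z ** X ** Z = Z" "transpose (X ** Z) = X ** Z" "transpose (Z ** X) = Z ** X"
    using assms by (auto simp: penrose_inverse_def)
  have "Y = Y ** transpose (X ** Y)" using Y by (simp add: matrix_mul_assoc)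
  also have "\<dots> = Y ** transpose (X ** Z ** X ** Y)" using Z by simp
  also have "\<dots> = Y ** transpose (X ** Y) ** transpose (X ** Z)"
    by (simp add: matrix_transpose_mul matrix_mul_assoc)
  also have "\<dots> = Y ** X ** Z" using Y Z by (simp add: matrix_mul_assoc)
  also have "\<dots> = transpose (Y ** X) ** transpose (Z ** X) ** Z" using Y Z by (metis matrix_mul_assoc)
  also have "\<dots> = transpose (Z ** X ** Y ** X) ** Z"
    by (simp add: matrix_transpose_mul matrix_mul_assoc)
  also have "\<dots> = Z" using Y Z by (metis matrix_mul_assoc)
  finally show ?thesis .
qed

lemma pinv_eqI: "penrose_inverse X Y \<Longrightarrow> pinv X = Y"
  unfolding pinv_def penrose_inverse_def[symmetric] by (blast intro: penrose_inverse_unique)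

text \<open>For \<open>S\<close> of full row rank the Penrose inverse is \<open>S\<^sup>T (S S\<^sup>T)\<inverse>\<close>.\<close>
lemma right_invertible_pinv:
  fixes S :: "real^'n^'m"
  assumes R: "S ** R = mat 1"
  shows "S ** pinv S = mat 1"
proof -
  define M where "M = S ** transpose S"
  have "z = 0" if "M *v z = 0" for z
  proof -
    have "(transpose S *v z) \<bullet> (transpose S *v z) = z \<bullet> (M *v z)"
      by (simp add: M_def inner_matrix_vector_transpose matrix_vector_mul_assoc[symmetric])
    then have "transpose S *v z = 0" using that by simp
    then have "transpose (S ** R) *v z = 0"
      by (metis matrix_transpose_mul matrix_vector_mul_assoc matrix_vector_mult_0_right)
    then show "z = 0" using R by simp
  qed
  then obtain G where "G ** M = mat 1" using matrix_left_invertible_ker by blast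
  then have MG: "M ** G = mat 1" using matrix_left_right_inverse by blast
  have "transpose G = G"
  proof -
    have "transpose G = transpose G ** (M ** G)" using MG by simp
    also have "\<dots> = transpose (transpose M ** G) ** G"
      by (simp add: matrix_transpose_mul matrix_mul_assoc)
    also have "transpose M = M" by (simp add: M_def matrix_transpose_mul)
    finally show ?thesis using MG by simp
  qed
  define Y where "Y = transpose S ** G"
  have SY: "S ** Y = mat 1" using MG by (simp add: Y_def M_def matrix_mul_assoc)
  have "Y ** S ** Y = Y" using SY by (metis matrix_mul_assoc matrix_mul_rid)
  moreover have "transpose (Y ** S) = Y ** S"
    using \<open>transpose G = G\<close> by (simp add: Y_def matrix_transpose_mul matrix_mul_assoc)
  ultimately have "penrose_inverse S Y"
    unfolding penrose_inverse_def using SY by simp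
  then show ?thesis using SY by (simp add: pinv_eqI)
qed

lemma matrix_inv_right:
  fixes A :: "real^'n^'n"
  assumes "invertible A"
  shows "A ** matrix_inv A = mat 1"
proof -
  have "\<exists>A'. A ** A' = mat 1 \<and> A' ** A = mat 1" using assms by (simp add: invertible_def)
  then show ?thesis unfolding matrix_inv_def by (rule someI2_ex) blast
qed

lemma kernel_invariant_factor:
  fixes S :: "real^'n^'m" and M :: "real^'n^'n" and G :: "real^'m^'n"
  assumes SGS: "S ** G ** S = S" and ker: "\<And>x. S *v x = 0 \<Longrightarrow> (S ** M) *v x = 0"
  shows "S ** M = S ** M ** G ** S"
proof (rule matrix_eq[THEN iffD2], intro allI)
  fix x
  have "S *v (x - G *v (S *v x)) = 0"
    using SGS by (simp add: matrix_vector_mult_diff_distrib matrix_vector_mul_assoc matrix_mul_assoc)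
  then have "(S ** M) *v (x - G *v (S *v x)) = 0" by (rule ker)
  then show "(S ** M) *v x = (S ** M ** G ** S) *v x"
    by (simp add: matrix_vector_mult_diff_distrib matrix_vector_mul_assoc matrix_mul_assoc)
qed

lemma closed_loop_sliding_dynamics:
  fixes A :: "real^'n^'n" and B :: "real^'m^'n" and K S :: "real^'n^'m"
  assumes "det (S ** B) \<noteq> 0" and "\<And>x. S *v x = 0 \<Longrightarrow> (S ** (A + B ** K)) *v x = 0"
  shows "S *v (A *v x + B *v (K *v x + matrix_inv (S ** B) *v v + d))
    = (S ** (A + B ** K) ** pinv S) *v (S *v x) + v + (S ** B) *v d"
proof -
  have SB_inv: "S ** B ** matrix_inv (S ** B) = mat 1"
    using assms(1) by (simp add: invertible_det_nz matrix_inv_right)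
  then have "S ** pinv S = mat 1"
    by (intro right_invertible_pinv[of S "B ** matrix_inv (S ** B)"]) (simp add: matrix_mul_assoc)
  then have S_Acl: "S ** (A + B ** K) = S ** (A + B ** K) ** pinv S ** S"
    using kernel_invariant_factor[of S "pinv S" "A + B ** K"] assms(2) by simp
  have "S *v (A *v x + B *v (K *v x + matrix_inv (S ** B) *v v + d))
      = (S ** (A + B ** K)) *v x + (S ** B ** matrix_inv (S ** B)) *v v + (S ** B) *v d"
    by (simp add: matrix_vector_right_distrib matrix_vector_mult_add_rdistrib
        matrix_add_ldistrib matrix_vector_mul_assoc matrix_mul_assoc)
  then show ?thesis
    using S_Acl SB_inv by (metis matrix_vector_mul_assoc matrix_vector_mul_lid)
qed

lemma lyapunov_equation_form:
  assumes "symmetric_mat P" and "transpose A ** P + P ** A = - Q"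
  shows "2 * (x \<bullet> (P *v (A *v x))) = - (x \<bullet> (Q *v x))"
proof -
  have "x \<bullet> (transpose A *v (P *v x)) = (A *v x) \<bullet> (P *v x)"
    by (metis inner_matrix_vector_transpose transpose_transpose)
  also have "\<dots> = x \<bullet> (P *v (A *v x))"
    by (metis inner_commute symmetric_mat_inner assms(1))
  finally have "x \<bullet> ((transpose A ** P + P ** A) *v x) = 2 * (x \<bullet> (P *v (A *v x)))"
    by (simp only: matrix_vector_mult_add_rdistrib inner_add_right matrix_vector_mul_assoc[symmetric])
  then show ?thesis using assms(2) by (simp add: uminus_matrix_vector_mult)
qed

lemma sliding_reaching_inequality:
  fixes P Q A :: "real^'m^'m" and C :: "real^'k^'m"
  assumes P_sym: "symmetric_mat P" and P_pd: "pos_def P" and Q_pd: "pos_def Q"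
    and lyap: "transpose A ** P + P ** A = - Q"
    and "0 \<le> mu_star"
    and mu_ge: "mu \<ge> (1 / lambda_min P) * (mu_star / 2 + lambda_max P * onorm ((*v) C) * DeltaM)"
    and d: "norm d \<le> DeltaM" and "s \<noteq> 0"
  shows "s \<bullet> (P *v (A *v s - (mu / norm s) *\<^sub>R s + C *v d)) \<le> - (mu_star / 2) * norm s"
proof -
  define lmin where "lmin = lambda_min P"
  define lmax where "lmax = lambda_max P"
  define nC where "nC = onorm ((*v) C)"
  have "0 < lmin" "0 < lmax"
    using pos_def_eigenvalue_pos[OF P_pd] lambda_min_in_real_eigenvalues[OF P_sym]
      lambda_max_in_real_eigenvalues[OF P_sym] by (auto simp: lmin_def lmax_def)
  have "0 \<le> nC" unfolding nC_def by (rule onorm_pos_le) simp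
  have "0 \<le> DeltaM" using d norm_ge_zero order_trans by blast
  have mu_lmin: "mu_star / 2 + lmax * nC * DeltaM \<le> mu * lmin"
    using mu_ge \<open>0 < lmin\<close> by (simp add: lmin_def lmax_def nC_def field_simps)
  moreover have "0 \<le> mu_star / 2 + lmax * nC * DeltaM"
    using \<open>0 \<le> mu_star\<close> \<open>0 < lmax\<close> \<open>0 \<le> nC\<close> \<open>0 \<le> DeltaM\<close> by simp
  ultimately have "0 \<le> mu * lmin" by linarith
  then have "0 \<le> mu" using \<open>0 < lmin\<close> by (simp add: zero_le_mult_iff)
  have drift: "s \<bullet> (P *v (A *v s)) \<le> 0"
    using lyapunov_equation_form[OF P_sym lyap, of s] pos_def_imp_psd[OF Q_pd, of s] by linarith
  have control: "s \<bullet> (P *v ((mu / norm s) *\<^sub>R s)) \<ge> mu * lmin * norm s"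
  proof -
    have "mu * lmin * norm s = (mu / norm s) * (lmin * (s \<bullet> s))"
      using \<open>s \<noteq> 0\<close> by (simp add: power2_norm_eq_inner[symmetric] power2_eq_square field_simps)
    also have "\<dots> \<le> (mu / norm s) * (s \<bullet> (P *v s))"
      using mult_left_mono[OF lambda_min_le_form[OF P_sym, of s], of "mu / norm s"] \<open>0 \<le> mu\<close>
      by (simp add: lmin_def)
    finally show ?thesis by (simp add: matrix_vector_mult_scaleR)
  qed
  have disturbance: "s \<bullet> (P *v (C *v d)) \<le> lmax * nC * DeltaM * norm s"
  proof -
    have "s \<bullet> (P *v (C *v d)) \<le> lmax * norm s * norm (C *v d)"
      using symmetric_psd_bilinear_le[OF P_sym pos_def_imp_psd[OF P_pd] lambda_max_ge_form[OF P_sym]]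
      by (simp add: lmax_def)
    also have "norm (C *v d) \<le> nC * DeltaM"
      using onorm[OF matrix_vector_mul_bounded_linear, of C d] d \<open>0 \<le> nC\<close>
      by (simp add: nC_def) (meson mult_left_mono order_trans)
    then have "lmax * norm s * norm (C *v d) \<le> lmax * norm s * (nC * DeltaM)"
      using \<open>0 < lmax\<close> by (simp add: mult_left_mono)
    finally show ?thesis by (simp add: mult_ac)
  qed
  have "s \<bullet> (P *v (A *v s - (mu / norm s) *\<^sub>R s + C *v d))
      = s \<bullet> (P *v (A *v s)) - s \<bullet> (P *v ((mu / norm s) *\<^sub>R s)) + s \<bullet> (P *v (C *v d))"
    by (simp add: matrix_vector_right_distrib matrix_vector_mult_diff_distrib inner_add_right inner_diff_right)
  also have "\<dots> \<le> - (mu * lmin - lmax * nC * DeltaM) * norm s"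
    using drift control disturbance by (simp add: algebra_simps)
  also have "\<dots> \<le> - (mu_star / 2) * norm s"
    using mu_lmin by (intro mult_right_mono) auto
  finally show ?thesis .
qed

lemma sqrt_form_has_real_derivative:
  fixes s :: "real \<Rightarrow> real^'m" and P :: "real^'m^'m"
  assumes P_sym: "symmetric_mat P" and P_pd: "pos_def P"
    and deriv: "(s has_vector_derivative s') (at t)" and "s t \<noteq> 0"
  shows "((\<lambda>r. sqrt (s r \<bullet> (P *v s r))) has_real_derivative
           (s t \<bullet> (P *v s')) / sqrt (s t \<bullet> (P *v s t))) (at t)"
proof -
  have "0 < s t \<bullet> (P *v s t)" using P_pd \<open>s t \<noteq> 0\<close> by (simp add: pos_def_def)
  have "((\<lambda>r. P *v s r) has_vector_derivative P *v s') (at t)"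
    by (rule bounded_linear.has_vector_derivative[OF matrix_vector_mul_bounded_linear deriv])
  from bounded_bilinear.has_vector_derivative[OF bounded_bilinear_inner deriv this]
  have "((\<lambda>r. s r \<bullet> (P *v s r)) has_vector_derivative s t \<bullet> (P *v s') + s' \<bullet> (P *v s t)) (at t)" .
  moreover have "s' \<bullet> (P *v s t) = s t \<bullet> (P *v s')"
    by (metis symmetric_mat_inner[OF P_sym] inner_commute)
  ultimately have "((\<lambda>r. s r \<bullet> (P *v s r)) has_real_derivative 2 * (s t \<bullet> (P *v s'))) (at t)"
    by (simp add: has_real_derivative_iff_has_vector_derivative)
  from DERIV_chain'[OF this DERIV_real_sqrt[OF \<open>0 < s t \<bullet> (P *v s t)\<close>]]
  show ?thesis by (simp add: inverse_eq_divide)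
qed

lemma sqrt_form_derivative_le:
  fixes s :: "real \<Rightarrow> real^'m" and P :: "real^'m^'m"
  assumes P_sym: "symmetric_mat P" and P_pd: "pos_def P"
    and deriv: "(s has_vector_derivative s') (at t)" and "s t \<noteq> 0"
    and decay: "s t \<bullet> (P *v s') \<le> - k * norm (s t)" and "0 \<le> k"
  shows "\<exists>d. ((\<lambda>r. sqrt (s r \<bullet> (P *v s r))) has_real_derivative d) (at t) \<and>
             d \<le> - (k / sqrt (lambda_max P))"
proof -
  define V where "V = s t \<bullet> (P *v s t)"
  have "0 < V" using P_pd \<open>s t \<noteq> 0\<close> by (simp add: pos_def_def V_def)
  have "V \<le> lambda_max P * (norm (s t))\<^sup>2"
    using lambda_max_ge_form[OF P_sym] by (simp add: V_def power2_norm_eq_inner)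
  then have "sqrt V \<le> sqrt (lambda_max P) * norm (s t)"
    using real_sqrt_le_mono by (fastforce simp: real_sqrt_mult)
  then have "k * sqrt V \<le> k * (sqrt (lambda_max P) * norm (s t))"
    using \<open>0 \<le> k\<close> by (rule mult_left_mono)
  moreover have "0 < lambda_max P"
    by (rule pos_def_eigenvalue_pos[OF P_pd lambda_max_in_real_eigenvalues[OF P_sym]])
  ultimately have "k / sqrt (lambda_max P) \<le> k * norm (s t) / sqrt V"
    using \<open>0 < V\<close> by (simp add: divide_simps mult_ac)
  moreover have "(s t \<bullet> (P *v s')) / sqrt V \<le> - k * norm (s t) / sqrt V"
    using divide_right_mono[OF decay, of "sqrt V"] \<open>0 < V\<close> by simp
  ultimately show ?thesis
    using sqrt_form_has_real_derivative[OF P_sym P_pd deriv \<open>s t \<noteq> 0\<close>]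
    by (intro exI[of _ "(s t \<bullet> (P *v s')) / sqrt V"]) (simp add: V_def)
qed

lemma uniform_decrease_reaches_negative:
  fixes W :: "real \<Rightarrow> real"
  assumes "0 < c" and der: "\<And>t. t0 < t \<Longrightarrow> \<exists>d. (W has_real_derivative d) (at t) \<and> d \<le> - c"
  shows "\<exists>t>t0. W t < 0"
proof -
  define t1 where "t1 = t0 + 1"
  define T where "T = t1 + \<bar>W t1\<bar> / c + 1"
  have "t1 \<le> T" using \<open>0 < c\<close> by (simp add: T_def)
  have "W T + c * T \<le> W t1 + c * t1"
  proof (rule DERIV_nonpos_imp_nonincreasing[OF \<open>t1 \<le> T\<close>])
    fix s assume "t1 \<le> s"
    then have "t0 < s" by (simp add: t1_def)
    then obtain d where "(W has_real_derivative d) (at s)" "d \<le> - c"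
      using der by blast
    then show "\<exists>e. ((\<lambda>s. W s + c * s) has_real_derivative e) (at s) \<and> e \<le> 0"
      by (auto intro!: derivative_eq_intros)
  qed
  then have "W T \<le> W t1 - c * (T - t1)" by (simp add: algebra_simps)
  also have "\<dots> = W t1 - \<bar>W t1\<bar> - c" using \<open>0 < c\<close> by (simp add: T_def algebra_simps)
  also have "\<dots> < 0" using \<open>0 < c\<close> abs_ge_self[of "W t1"] by linarith
  finally show ?thesis using \<open>t1 \<le> T\<close> t1_def by (intro exI[of _ T]) auto
qed

theorem proposition1:
  fixes A :: "real^'n^'n" and B :: "real^'m^'n" and K S :: "real^'n^'m"
    and Delta :: "real^'n \<Rightarrow> real \<Rightarrow> real^'m" and DeltaM :: real
    and P Q :: "real^'m^'m" and mu mu_star :: real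
    and y :: "real \<Rightarrow> real^'n" and t0 :: real
  assumes B_full_rank: "rank B = min CARD('n) CARD('m)"
    and Delta_bound: "\<forall>x t. norm (Delta x t) \<le> DeltaM"
    and Acl_hurwitz: "hurwitz (A + B ** K)"
    and SB_inv: "det (S ** B) \<noteq> 0"
    and S_inv: "\<forall>x. S *v x = 0 \<longrightarrow> (S ** (A + B ** K)) *v x = 0"
    and Q_sym: "symmetric_mat Q" and Q_pd: "pos_def Q"
    and P_sym: "symmetric_mat P" and P_pd: "pos_def P"
    and P_lyap: "transpose (S ** (A + B ** K) ** pinv S) ** P + P ** (S ** (A + B ** K) ** pinv S) = - Q"
    and P_unique: "\<forall>P'. transpose (S ** (A + B ** K) ** pinv S) ** P' + P' ** (S ** (A + B ** K) ** pinv S) = - Q \<longrightarrow> P' = P"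
    and mu_star_pos: "mu_star > 0"
    and mu_ge: "mu \<ge> (1 / lambda_min P) * (mu_star / 2 + lambda_max P * onorm ((*v) (S ** B)) * DeltaM)"
    and sol: "\<forall>t\<ge>t0. (\<forall>s\<in>{t0..t}. S *v y s \<noteq> 0) \<longrightarrow>
       (y has_vector_derivative
          (A *v y t + B *v (K *v y t
              + matrix_inv (S ** B) *v (if S *v y t = 0 then 0 else - (mu / norm (S *v y t)) *\<^sub>R (S *v y t))
              + Delta (y t) t)))
        (at t within {t0..})"
  shows "\<exists>T\<ge>t0. S *v y T = 0"
proof (rule ccontr)
  assume "\<not> (\<exists>T\<ge>t0. S *v y T = 0)"
  then have nonzero: "S *v y t \<noteq> 0" if "t0 \<le> t" for t
    using that by blast
  define As where "As = S ** (A + B ** K) ** pinv S"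
  define W where "W = (\<lambda>t. sqrt ((S *v y t) \<bullet> (P *v (S *v y t))))"
  text \<open>The rank of \<open>B\<close>, Hurwitz stability, the symmetry of \<open>Q\<close> and the uniqueness of \<open>P\<close>
    only guarantee that a suitable \<open>P\<close> exists; the reaching argument does not use them.\<close>
  have "\<exists>d. (W has_real_derivative d) (at t) \<and> d \<le> - (mu_star / 2 / sqrt (lambda_max P))"
    if "t0 < t" for t
  proof -
    define s where "s = S *v y t"
    have "s \<noteq> 0" using nonzero that by (simp add: s_def)
    have "at t within {t0..} = at t"
      using that by (intro at_within_interior) simp
    then have "(y has_vector_derivative A *v y t + B *v (K *v y t
        + matrix_inv (S ** B) *v (- (mu / norm s) *\<^sub>R s) + Delta (y t) t)) (at t)"
      using sol[rule_format, of t] that nonzero \<open>s \<noteq> 0\<close> by (simp add: s_def)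
    from bounded_linear.has_vector_derivative[OF matrix_vector_mul_bounded_linear this, of S]
    have "((\<lambda>r. S *v y r) has_vector_derivative
        As *v s - (mu / norm s) *\<^sub>R s + (S ** B) *v Delta (y t) t) (at t)"
      using closed_loop_sliding_dynamics[OF SB_inv] S_inv by (simp add: As_def s_def)
    moreover have "s \<bullet> (P *v (As *v s - (mu / norm s) *\<^sub>R s + (S ** B) *v Delta (y t) t))
        \<le> - (mu_star / 2) * norm s"
      by (rule sliding_reaching_inequality[OF P_sym P_pd Q_pd P_lyap[folded As_def]
            less_imp_le[OF mu_star_pos] mu_ge Delta_bound[rule_format] \<open>s \<noteq> 0\<close>])
    moreover have "0 \<le> mu_star / 2" using mu_star_pos by simp
    ultimately show ?thesis
      unfolding W_def s_def using sqrt_form_derivative_le[OF P_sym P_pd] \<open>s \<noteq> 0\<close>[unfolded s_def]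
      by blast
  qed
  moreover have "0 < mu_star / 2 / sqrt (lambda_max P)"
    using mu_star_pos pos_def_eigenvalue_pos[OF P_pd lambda_max_in_real_eigenvalues[OF P_sym]] by simp
  ultimately obtain T where "t0 < T" "W T < 0"
    using uniform_decrease_reaches_negative[of "mu_star / 2 / sqrt (lambda_max P)" t0 W] by blast
  then show False using pos_def_imp_psd[OF P_pd, of "S *v y T"] by (simp add: W_def)
qed

end
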